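(* Let $\vartheta$ be a semi-compatible random substitution on $\mathcal A=\{a_1,\dots,a_n\}$ with substitution matrix $M$. Then for all integers $1\leqslant k<m$, \[ \bm q_k^\intercal M^{m-k}\;\leqslant\;\bm q_m^\intercal\;\leqslant\;\bm q_k^\intercal M^{m-k}+\bm q_{m-k}^\intercal \] component-wise.
   Context: Let $\mathcal A=\{a_1,\dots,a_n\}$ be a finite alphabet, $\mathcal A^+$ the set of finite non-empty words over $\mathcal A$, and $\mathcal F(\mathcal A^+)$ the set of finite non-empty subsets of $\mathcal A^+$. For $A,B\in\mathcal F(\mathcal A^+)$ put $AB=\{uv: u\in A, v\in B\}$. A random substitution is a map $\vartheta:\mathcal A\to\mathcal F(\mathcal A^+)$, extended to words by $\vartheta(u_1\cdots u_m)=\vartheta(u_1)\cdots\vartheta(u_m)$ and to sets by $\vartheta(A)=\bigcup_{u\in A}\vartheta(u)$; powers $\vartheta^m$ are compositions. $|u|_a$ denotes the number of occurrences of the letter $a$ in $u$ and $\Phi(u)=(|u|_{a_1},\dots,|u|_{a_n})^\intercal$. $\vartheta$ is semi-compatible if for every $a\in\mathcal A$ all words in $\vartheta(a)$ have the same Abelianisation $\Phi$. The substitution matrix is $M_{ij}=|u|_{a_i}$ for any $u\in\vartheta(a_j)$. Set $q_{m,i}=\log(\#\vartheta^m(a_i))$ and $\bm q_m=(q_{m,1},\dots,q_{m,n})^\intercal$. *)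

theory Defs
  imports "HOL-Analysis.Analysis"
begin

definition random_substitution :: "('a \<Rightarrow> 'a list set) \<Rightarrow> bool" where
  "random_substitution \<theta> \<longleftrightarrow> (\<forall>a. finite (\<theta> a) \<and> \<theta> a \<noteq> {} \<and> [] \<notin> \<theta> a)"

fun subst_word :: "('a \<Rightarrow> 'a list set) \<Rightarrow> 'a list \<Rightarrow> 'a list set" where
  "subst_word \<theta> [] = {[]}"
| "subst_word \<theta> (x # xs) = {u @ v | u v. u \<in> \<theta> x \<and> v \<in> subst_word \<theta> xs}"

definition subst_set :: "('a \<Rightarrow> 'a list set) \<Rightarrow> 'a list set \<Rightarrow> 'a list set" where
  "subst_set \<theta> A = (\<Union>u\<in>A. subst_word \<theta> u)"

fun subst_pow :: "('a \<Rightarrow> 'a list set) \<Rightarrow> nat \<Rightarrow> 'a list set \<Rightarrow> 'a list set" where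
  "subst_pow \<theta> 0 A = A"
| "subst_pow \<theta> (Suc m) A = subst_set \<theta> (subst_pow \<theta> m A)"

definition semi_compatible :: "('a \<Rightarrow> 'a list set) \<Rightarrow> bool" where
  "semi_compatible \<theta> \<longleftrightarrow>
     (\<forall>a. \<forall>u\<in>\<theta> a. \<forall>v\<in>\<theta> a. \<forall>b. count_list u b = count_list v b)"

definition subst_matrix :: "('a::finite \<Rightarrow> 'a list set) \<Rightarrow> real^'a^'a" where
  "subst_matrix \<theta> = (\<chi> i j. real (count_list (SOME u. u \<in> \<theta> j) i))"

fun mat_pow :: "real^'n^'n \<Rightarrow> nat \<Rightarrow> real^'n^'n" where
  "mat_pow A 0 = mat 1"
| "mat_pow A (Suc k) = mat_pow A k ** A"

definition qvec :: "('a::finite \<Rightarrow> 'a list set) \<Rightarrow> nat \<Rightarrow> real^'a" where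
  "qvec \<theta> m = (\<chi> i. ln (real (card (subst_pow \<theta> m {[i]}))))"

end

theory Submission
  imports Defs
begin

(*
  theta^m(a_j) is the union of the sets theta^k(v) over v in theta^(m-k)(a_j). By
  semi-compatibility all words of theta^k(a) have the same abelianisation, hence the same
  length, so concatenation is injective on them and #theta^k(v) = prod_i #theta^k(a_i)^|v|_(a_i),
  i.e. log #theta^k(v) = q_k . Phi(v). Every v in theta^(m-k)(a_j) has Phi(v) = M^(m-k) e_j,
  so these sets all have the same size N with log N = (q_k^T M^(m-k))_j, and their union
  has between N and #theta^(m-k)(a_j) * N elements.
*)

definition set_append :: "'a list set \<Rightarrow> 'a list set \<Rightarrow> 'a list set" where
  "set_append A B = (\<lambda>(u, v). u @ v) ` (A \<times> B)"

definition parikh_vector :: "'a::finite list \<Rightarrow> real^'a" where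
  "parikh_vector w = (\<chi> c. real (count_list w c))"

lemma set_append_Nil: "set_append {[]} B = B"
  unfolding set_append_def by (auto simp: image_iff)

lemma set_append_singletons: "set_append {u} {v} = {u @ v}"
  unfolding set_append_def by simp

lemma set_append_assoc: "set_append (set_append A B) C = set_append A (set_append B C)"
  unfolding set_append_def by (auto simp: image_iff; blast)

lemma set_append_eq_empty_iff: "set_append A B = {} \<longleftrightarrow> A = {} \<or> B = {}"
  unfolding set_append_def by simp

lemma finite_set_append: "finite A \<Longrightarrow> finite B \<Longrightarrow> finite (set_append A B)"
  unfolding set_append_def by simp

lemma card_set_append:
  assumes same_length: "\<And>u u'. u \<in> A \<Longrightarrow> u' \<in> A \<Longrightarrow> length u = length u'"
  shows "card (set_append A B) = card A * card B"
proof -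
  have "inj_on (\<lambda>(u, v). u @ v) (A \<times> B)"
  proof (rule inj_onI, clarify)
    fix u v u' v' assume "u \<in> A" "u' \<in> A" "u @ v = u' @ v'"
    moreover from \<open>u \<in> A\<close> \<open>u' \<in> A\<close> have "length u = length u'" by (rule same_length)
    ultimately show "u = u' \<and> v = v'" by (simp add: append_eq_append_conv)
  qed
  then show ?thesis
    unfolding set_append_def by (simp add: card_image card_cartesian_product)
qed

lemma subst_word_Cons_set_append: "subst_word \<theta> (x # xs) = set_append (\<theta> x) (subst_word \<theta> xs)"
  unfolding set_append_def by auto

declare subst_word.simps(2) [simp del]

lemma subst_word_append: "subst_word \<theta> (xs @ ys) = set_append (subst_word \<theta> xs) (subst_word \<theta> ys)"
  by (induction xs) (simp_all add: set_append_Nil subst_word_Cons_set_append set_append_assoc)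

lemma subst_set_set_append:
  "subst_set \<theta> (set_append A B) = set_append (subst_set \<theta> A) (subst_set \<theta> B)"
  unfolding subst_set_def set_append_def by (auto simp: subst_word_append set_append_def image_iff; blast)

lemma subst_pow_set_append:
  "subst_pow \<theta> l (set_append A B) = set_append (subst_pow \<theta> l A) (subst_pow \<theta> l B)"
  by (induction l) (simp_all add: subst_set_set_append)

lemma subst_pow_add: "subst_pow \<theta> (l + l') A = subst_pow \<theta> l (subst_pow \<theta> l' A)"
  by (induction l) simp_all

lemma subst_pow_eq_UN_singleton: "subst_pow \<theta> l A = (\<Union>u\<in>A. subst_pow \<theta> l {u})"
proof (induction l arbitrary: A)
  case (Suc l)
  have "subst_pow \<theta> (Suc l) A = subst_set \<theta> (\<Union>u\<in>A. subst_pow \<theta> l {u})"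
    by (simp only: subst_pow.simps Suc.IH[of A])
  then show ?case by (simp add: subst_set_def)
qed simp

lemma subst_pow_Suc_singleton:
  "subst_pow \<theta> (Suc l) {u} = (\<Union>u'\<in>subst_word \<theta> u. subst_pow \<theta> l {u'})"
proof -
  have "subst_pow \<theta> (Suc l) {u} = subst_pow \<theta> l (subst_word \<theta> u)"
    using subst_pow_add[of \<theta> l 1 "{u}"] by (simp add: subst_set_def)
  then show ?thesis
    by (simp only: subst_pow_eq_UN_singleton[of \<theta> l "subst_word \<theta> u"])
qed

lemma subst_pow_Nil: "subst_pow \<theta> l {[]} = {[]}"
  by (induction l) (simp_all add: subst_set_def)

lemma finite_nonempty_subst_word:
  assumes "random_substitution \<theta>"
  shows "finite (subst_word \<theta> u) \<and> subst_word \<theta> u \<noteq> {}"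
proof (induction u)
  case (Cons a u)
  have "finite (\<theta> a)" "\<theta> a \<noteq> {}"
    using assms by (auto simp: random_substitution_def)
  with Cons.IH show ?case
    by (simp add: subst_word_Cons_set_append finite_set_append set_append_eq_empty_iff)
qed simp

lemma finite_nonempty_subst_pow:
  assumes "random_substitution \<theta>" "finite A" "A \<noteq> {}"
  shows "finite (subst_pow \<theta> l A) \<and> subst_pow \<theta> l A \<noteq> {}"
proof (induction l)
  case (Suc l)
  then obtain u where "u \<in> subst_pow \<theta> l A" by blast
  with Suc finite_nonempty_subst_word[OF assms(1)] show ?case
    unfolding subst_pow.simps subst_set_def by blast
qed (use assms in simp)

lemma card_subst_pow_pos:
  assumes "random_substitution \<theta>"
  shows "card (subst_pow \<theta> l {u}) > 0"
  using finite_nonempty_subst_pow[OF assms, of "{u}" l] by (simp add: card_gt_0_iff)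

lemma parikh_vector_append: "parikh_vector (u @ v) = parikh_vector u + parikh_vector v"
  by (simp add: parikh_vector_def vec_eq_iff)

lemma parikh_vector_Cons: "parikh_vector (a # u) = axis a 1 + parikh_vector u"
  by (simp add: parikh_vector_def vec_eq_iff axis_def)

lemma parikh_vector_singleton: "parikh_vector [a] = axis a 1"
  using parikh_vector_Cons[of a "[]"] by (simp add: parikh_vector_def vec_eq_iff)

lemma length_eq_if_parikh_vector_eq:
  assumes "parikh_vector u = parikh_vector v"
  shows "length u = length v"
proof -
  have "count_list u = count_list v"
    using assms by (auto simp: parikh_vector_def vec_eq_iff)
  then show ?thesis
    using sum_count_set[of u UNIV] sum_count_set[of v UNIV] by simp
qed

lemma parikh_vector_subst_letter:
  assumes "random_substitution \<theta>" "semi_compatible \<theta>" "x \<in> \<theta> a"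
  shows "parikh_vector x = column a (subst_matrix \<theta>)"
proof -
  have "(SOME u. u \<in> \<theta> a) \<in> \<theta> a"
    using assms(1) by (simp add: random_substitution_def some_in_eq)
  then have "count_list x b = count_list (SOME u. u \<in> \<theta> a) b" for b
    using assms(2,3) unfolding semi_compatible_def by blast
  then show ?thesis
    by (simp add: parikh_vector_def column_def subst_matrix_def)
qed

lemma parikh_vector_subst_word:
  assumes "random_substitution \<theta>" "semi_compatible \<theta>"
  shows "w \<in> subst_word \<theta> u \<Longrightarrow> parikh_vector w = subst_matrix \<theta> *v parikh_vector u"
proof (induction u arbitrary: w)
  case Nil
  then show ?case by (simp add: parikh_vector_def vec_eq_iff matrix_vector_mult_def)
next
  case (Cons a u)
  then obtain x y where "w = x @ y" "x \<in> \<theta> a" "y \<in> subst_word \<theta> u"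
    by (auto simp: subst_word_Cons_set_append set_append_def)
  with Cons.IH show ?case
    by (simp add: parikh_vector_append parikh_vector_Cons parikh_vector_subst_letter[OF assms]
        matrix_vector_right_distrib matrix_vector_mult_basis)
qed

lemma parikh_vector_subst_pow:
  assumes "random_substitution \<theta>" "semi_compatible \<theta>"
  shows "w \<in> subst_pow \<theta> l {u} \<Longrightarrow>
    parikh_vector w = mat_pow (subst_matrix \<theta>) l *v parikh_vector u"
proof (induction l arbitrary: u)
  case (Suc l)
  then obtain u' where "u' \<in> subst_word \<theta> u" "w \<in> subst_pow \<theta> l {u'}"
    unfolding subst_pow_Suc_singleton by blast
  with Suc.IH show ?case
    by (simp add: parikh_vector_subst_word[OF assms] matrix_vector_mul_assoc)
qed simp

lemma card_subst_pow_Cons: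
  fixes \<theta> :: "'a::finite \<Rightarrow> 'a list set"
  assumes "random_substitution \<theta>" "semi_compatible \<theta>"
  shows "card (subst_pow \<theta> l {a # u}) = card (subst_pow \<theta> l {[a]}) * card (subst_pow \<theta> l {u})"
proof -
  let ?S = "\<lambda>x. subst_pow \<theta> l {x}"
  have "?S (a # u) = set_append (?S [a]) (?S u)"
    using subst_pow_set_append[of \<theta> l "{[a]}" "{u}"] by (simp add: set_append_singletons)
  moreover have "length x = length x'" if "x \<in> ?S [a]" "x' \<in> ?S [a]" for x x'
    using parikh_vector_subst_pow[OF assms that(1)] parikh_vector_subst_pow[OF assms that(2)]
    by (metis length_eq_if_parikh_vector_eq)
  ultimately show ?thesis
    by (metis card_set_append)
qed

lemma qvec_nth: "qvec \<theta> l $ i = ln (real (card (subst_pow \<theta> l {[i]})))"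
  by (simp add: qvec_def)

lemma ln_card_subst_pow_word:
  assumes "random_substitution \<theta>" "semi_compatible \<theta>"
  shows "ln (real (card (subst_pow \<theta> l {u}))) = qvec \<theta> l \<bullet> parikh_vector u"
proof (induction u)
  case Nil
  then show ?case by (simp add: subst_pow_Nil parikh_vector_def inner_vec_def)
next
  case (Cons a u)
  have "ln (real (card (subst_pow \<theta> l {a # u})))
      = ln (real (card (subst_pow \<theta> l {[a]}))) + ln (real (card (subst_pow \<theta> l {u})))"
    unfolding card_subst_pow_Cons[OF assms, of l a u]
    using card_subst_pow_pos[OF assms(1)] by (simp add: ln_mult)
  also have "\<dots> = qvec \<theta> l \<bullet> (axis a 1 + parikh_vector u)"
    by (simp add: Cons.IH inner_add_right cart_eq_inner_axis[symmetric] qvec_nth)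
  finally show ?case
    by (simp add: parikh_vector_Cons)
qed

lemma ln_card_subst_pow_image_of_letter:
  assumes "random_substitution \<theta>" "semi_compatible \<theta>" "v \<in> subst_pow \<theta> l {[j]}"
  shows "ln (real (card (subst_pow \<theta> k {v}))) =
    (qvec \<theta> k v* mat_pow (subst_matrix \<theta>) l) $ j"
proof -
  have "parikh_vector v = mat_pow (subst_matrix \<theta>) l *v axis j 1"
    using parikh_vector_subst_pow[OF assms] by (simp add: parikh_vector_singleton)
  then show ?thesis
    by (simp add: ln_card_subst_pow_word[OF assms(1,2)] dot_lmul_matrix cart_eq_inner_axis)
qed

lemma ln_card_UN_bounds:
  fixes S :: "'i \<Rightarrow> 'b set"
  assumes "finite V" "V \<noteq> {}" and "\<And>v. v \<in> V \<Longrightarrow> finite (S v) \<and> card (S v) > 0"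
    and ln_card_S: "\<And>v. v \<in> V \<Longrightarrow> ln (real (card (S v))) = L"
  shows "L \<le> ln (real (card (\<Union>v\<in>V. S v)))
    \<and> ln (real (card (\<Union>v\<in>V. S v))) \<le> ln (real (card V)) + L"
proof -
  have card_S: "real (card (S v)) = exp L" if "v \<in> V" for v
    using assms(3)[OF that] ln_card_S[OF that] by (metis exp_ln of_nat_0_less_iff)
  obtain v0 where "v0 \<in> V" using assms(2) by blast
  then have "card (S v0) \<le> card (\<Union>v\<in>V. S v)"
    using assms(1,3) by (intro card_mono) auto
  then have lower: "exp L \<le> real (card (\<Union>v\<in>V. S v))"
    using card_S[OF \<open>v0 \<in> V\<close>] by linarith
  have "real (card (\<Union>v\<in>V. S v)) \<le> (\<Sum>v\<in>V. real (card (S v)))"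
    using card_UN_le[OF assms(1), of S] by (simp flip: of_nat_sum)
  also have "\<dots> = real (card V) * exp L"
    by (simp add: card_S)
  finally have upper: "real (card (\<Union>v\<in>V. S v)) \<le> real (card V) * exp L" .
  have "card V > 0" using assms(1,2) by (simp add: card_gt_0_iff)
  have "L \<le> ln (real (card (\<Union>v\<in>V. S v)))"
    using ln_mono[OF lower exp_gt_zero] by simp
  moreover have "ln (real (card (\<Union>v\<in>V. S v))) \<le> ln (real (card V) * exp L)"
    using upper lower exp_gt_zero[of L] by (intro ln_mono) linarith+
  ultimately show ?thesis
    using \<open>card V > 0\<close> by (simp add: ln_mult_pos)
qed

theorem mainTheorem2:
  fixes \<theta> :: "'a::finite \<Rightarrow> 'a list set"
    and k m :: nat
  assumes "random_substitution \<theta>"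
    and "semi_compatible \<theta>"
    and "1 \<le> k" and "k < m"
  shows "\<forall>j. (qvec \<theta> k v* mat_pow (subst_matrix \<theta>) (m - k)) $ j \<le> qvec \<theta> m $ j
           \<and> qvec \<theta> m $ j \<le> (qvec \<theta> k v* mat_pow (subst_matrix \<theta>) (m - k)) $ j + qvec \<theta> (m - k) $ j"
proof
  fix j
  let ?L = "(qvec \<theta> k v* mat_pow (subst_matrix \<theta>) (m - k)) $ j"
  let ?V = "subst_pow \<theta> (m - k) {[j]}"
  have "subst_pow \<theta> m {[j]} = subst_pow \<theta> k ?V"
    using subst_pow_add[of \<theta> k "m - k" "{[j]}"] \<open>k < m\<close> by simp
  also have "\<dots> = (\<Union>v\<in>?V. subst_pow \<theta> k {v})"
    by (rule subst_pow_eq_UN_singleton)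
  finally have decomposition: "subst_pow \<theta> m {[j]} = (\<Union>v\<in>?V. subst_pow \<theta> k {v})" .
  have "?L \<le> ln (real (card (\<Union>v\<in>?V. subst_pow \<theta> k {v})))
      \<and> ln (real (card (\<Union>v\<in>?V. subst_pow \<theta> k {v}))) \<le> ln (real (card ?V)) + ?L"
    using finite_nonempty_subst_pow[OF assms(1)] card_subst_pow_pos[OF assms(1)]
      ln_card_subst_pow_image_of_letter[OF assms(1,2)]
    by (intro ln_card_UN_bounds) auto
  then show "?L \<le> qvec \<theta> m $ j \<and> qvec \<theta> m $ j \<le> ?L + qvec \<theta> (m - k) $ j"
    by (simp add: qvec_nth decomposition)
qed

end
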